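(* Let $n\ge1$, $\gamma>0$, and let $A:[0,1]^{2n}\to\mathbb{R}_+^{n\times n}$ be a $\mathcal C^1$ matrix-valued function, defining the system $\dot{x} = -[x]A(x,y)\,y$, $\dot{y} = [x]A(x,y)\,y-\gamma y$. Suppose that, for all indices $i,j,k\in\{1,\dots,n\}$ with $k\ne i$, $$A_{ij}+x_i\frac{\partial A_{ij}}{\partial x_i}\ge 0,\qquad \frac{\partial A_{ij}}{\partial x_k}\ge 0$$ (at every point of the domain of $A$). Then the stability condition $\lambda_{\max}([x]A(x,\mathbf 0))<\gamma$ for equilibria $(x,\mathbf 0)$ is monotone: for all $x,z\in[0,1]^n$ with $x\le z$ one has $\lambda_{\max}([x]A(x,\mathbf 0))\le\lambda_{\max}([z]A(z,\mathbf 0))$; in particular, if $(z,\mathbf 0)$ satisfies $\lambda_{\max}([z]A(z,\mathbf 0))<\gamma$, then so does every $(x,\mathbf 0)$ with $x\le z$.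
   Context: For $x\in\mathbb{R}^n$, $[x]$ denotes the diagonal matrix with diagonal $x$. For a nonnegative square matrix $B$, $\lambda_{\max}(B)$ denotes its dominant (Perron) eigenvalue, i.e. its spectral radius. Vector inequalities are entrywise. The equilibria of the system are the points $(x,\mathbf 0)$, $x\in[0,1]^n$. *)

theory Defs
  imports "HOL-Analysis.Analysis"
begin

definition unit_cube :: "(real^'n) set" where
  "unit_cube = {x. \<forall>i. 0 \<le> x$i \<and> x$i \<le> 1}"

definition diag_mat :: "real^'n \<Rightarrow> real^'n^'n" where
  "diag_mat x = (\<chi> i j. if i = j then x$i else 0)"

text \<open>Spectral radius: largest modulus of a (complex) eigenvalue.
  For a nonnegative matrix this is its dominant (Perron) eigenvalue.\<close>
definition spec_rad :: "real^'n^'n \<Rightarrow> real" where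
  "spec_rad M = Max {cmod l | l. \<exists>v::complex^'n. v \<noteq> 0 \<and>
       (\<chi> i j. complex_of_real (M$i$j)) *v v = (\<chi> i. l * v$i)}"

end

(* The matrix [x]A(x,0) has entries x_i A_ij(x,0), whose partial derivative in x_k is
   A_ij + x_i dA_ij/dx_i for k = i and x_i dA_ij/dx_k otherwise.  The hypotheses make all of
   them nonnegative, so by the mean value theorem on the segment from x to z the nonnegative
   matrix [x]A(x,0) grows entrywise with x.  The spectral radius of nonnegative matrices is
   monotone under entrywise growth: if R v = l v with |l| = rho(R), then w = |v| satisfies
   rho(R) w <= R w <= S w, and a nonzero w >= 0 with r w <= S w forces r <= rho(S), since
   for rho(S) < s < r the powers of S/s stay bounded (Jordan normal form) while they
   stretch w by at least (r/s)^k. *)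

theory Submission
  imports Defs "Jordan_Normal_Form.Spectral_Radius"
begin

text \<open>Jordan_Normal_Form's \<open>vec_index\<close> and \<open>diag_mat\<close> clash with \<open>vec_nth\<close> and
  \<open>Defs.diag_mat\<close> used in the statement; vector indexing of the former is written \<open>$.\<close>\<close>

no_notation Matrix.vec_index (infixl \<open>$\<close> 100)
notation Matrix.vec_index (infixl \<open>$.\<close> 100)
hide_const (open) Matrix.diag_mat

lemma convex_unit_cube: "convex unit_cube"
proof -
  have "{t::real. 0 \<le> t \<and> t \<le> 1} = {0..1}" by auto
  then show ?thesis unfolding unit_cube_def by (intro convex_box_cart) simp
qed

lemma diag_mat_mult_nth: "(diag_mat x ** M) $ i $ j = x $ i * M $ i $ j"
  by (simp add: Defs.diag_mat_def matrix_matrix_mult_def if_distrib[of "\<lambda>a. a * _"] cong: if_cong)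

lemma partial_derivatives_nonneg_imp_mono:
  fixes f :: "real^'n \<Rightarrow> real"
  assumes S: "convex S"
    and der: "\<And>x. x \<in> S \<Longrightarrow> (f has_derivative f' x) (at x within S)"
    and partial_nonneg: "\<And>x k. x \<in> S \<Longrightarrow> 0 \<le> f' x (axis k 1)"
    and "x \<in> S" "z \<in> S" and le: "\<And>k. x $ k \<le> z $ k"
  shows "f x \<le> f z"
proof -
  define p where "p t = x + t *\<^sub>R (z - x)" for t :: real
  have p_in: "p ` {0..1} \<subseteq> S"
  proof
    fix y assume "y \<in> p ` {0..1}"
    then obtain t where "t \<in> {0..1}" "y = (1 - t) *\<^sub>R x + t *\<^sub>R z"
      by (auto simp: p_def algebra_simps)
    then show "y \<in> S" using convexD_alt[OF S \<open>x \<in> S\<close> \<open>z \<in> S\<close>] by auto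
  qed
  have path_der: "((\<lambda>t. f (p t)) has_derivative (\<lambda>h. f' (p t) (h *\<^sub>R (z - x)))) (at t within {0..1})"
    if "t \<in> {0..1}" for t
  proof (rule has_derivative_in_compose2[OF der p_in that])
    show "(p has_derivative (\<lambda>h. h *\<^sub>R (z - x))) (at t within {0..1})"
      unfolding p_def by (auto intro!: derivative_eq_intros)
  qed
  then obtain t where t: "t \<in> {0..1}" and mvt: "f (p 1) - f (p 0) = f' (p t) (z - x)"
    using mvt_very_simple[of 0 1 "\<lambda>t. f (p t)", OF _ path_der] by auto
  have "p t \<in> S" using p_in t by blast
  interpret linear "f' (p t)"
    using der[THEN has_derivative_linear] \<open>p t \<in> S\<close> .
  have "f' (p t) (z - x) = f' (p t) (\<Sum>k\<in>UNIV. (z - x) $ k *\<^sub>R axis k 1)"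
    using basis_expansion[of "z - x"] by (simp only: scalar_mult_eq_scaleR)
  also have "\<dots> = (\<Sum>k\<in>UNIV. (z - x) $ k * f' (p t) (axis k 1))"
    by (simp only: sum scale real_scaleR_def)
  also have "\<dots> \<ge> 0"
    using le partial_nonneg[OF \<open>p t \<in> S\<close>] by (intro sum_nonneg mult_nonneg_nonneg) auto
  finally show ?thesis using mvt by (simp add: p_def)
qed

lemma diag_mat_mult_entry_mono:
  fixes B :: "real^'n \<Rightarrow> real^'m^'n"
  assumes S: "convex S" and S_nonneg: "\<And>x i. x \<in> S \<Longrightarrow> 0 \<le> x $ i"
    and B_deriv: "\<And>x. x \<in> S \<Longrightarrow> (B has_derivative B' x) (at x within S)"
    and diag: "\<And>x i j. x \<in> S \<Longrightarrow> 0 \<le> B x $ i $ j + x $ i * B' x (axis i 1) $ i $ j"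
    and offdiag: "\<And>x i j k. x \<in> S \<Longrightarrow> k \<noteq> i \<Longrightarrow> 0 \<le> B' x (axis k 1) $ i $ j"
    and "x \<in> S" "z \<in> S" "\<And>k. x $ k \<le> z $ k"
  shows "(diag_mat x ** B x) $ i $ j \<le> (diag_mat z ** B z) $ i $ j"
proof -
  have "x $ i * B x $ i $ j \<le> z $ i * B z $ i $ j"
  proof (rule partial_derivatives_nonneg_imp_mono[OF S _ _ \<open>x \<in> S\<close> \<open>z \<in> S\<close>])
    fix y assume "y \<in> S"
    have "((\<lambda>y. y $ i) has_derivative (\<lambda>u. u $ i)) (at y within S)"
      by (rule bounded_linear_imp_has_derivative[OF bounded_linear_vec_nth])
    moreover have "((\<lambda>y. B y $ i $ j) has_derivative (\<lambda>u. B' y u $ i $ j)) (at y within S)"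
      using B_deriv[OF \<open>y \<in> S\<close>]
      by (intro bounded_linear.has_derivative[OF bounded_linear_vec_nth])
    ultimately show "((\<lambda>y. y $ i * B y $ i $ j) has_derivative
        (\<lambda>u. y $ i * B' y u $ i $ j + u $ i * B y $ i $ j)) (at y within S)"
      by (rule has_derivative_mult)
    show "0 \<le> y $ i * B' y (axis k 1) $ i $ j + axis k 1 $ i * B y $ i $ j" for k
      using diag[OF \<open>y \<in> S\<close>] offdiag[OF \<open>y \<in> S\<close>] S_nonneg[OF \<open>y \<in> S\<close>]
      by (cases "k = i") (simp_all add: add.commute axis_def)
  qed (use assms in auto)
  then show ?thesis by (simp add: diag_mat_mult_nth)
qed

abbreviation complex_mat :: "real mat \<Rightarrow> complex mat" where
  "complex_mat \<equiv> map_mat complex_of_real"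

lemma index_mult_mat_vec_sum:
  assumes "A \<in> carrier_mat n n" "v \<in> carrier_vec n" "i < n"
  shows "(A *\<^sub>v v) $. i = (\<Sum>j<n. A $$ (i,j) * v $. j)"
  using assms by (simp add: scalar_prod_def atLeast0LessThan)

lemma power_mat_nonneg:
  fixes T :: "real mat"
  assumes T: "T \<in> carrier_mat n n" and T_nonneg: "\<And>i j. i < n \<Longrightarrow> j < n \<Longrightarrow> 0 \<le> T $$ (i,j)"
    and "i < n" "j < n"
  shows "0 \<le> (T ^\<^sub>m k) $$ (i,j)"
  using \<open>i < n\<close> \<open>j < n\<close>
proof (induction k arbitrary: i j)
  case 0
  then show ?case using T by auto
next
  case (Suc k)
  have "(T ^\<^sub>m Suc k) $$ (i,j) = (\<Sum>l<n. (T ^\<^sub>m k) $$ (i,l) * T $$ (l,j))"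
    using Suc.prems T by (simp add: scalar_prod_def atLeast0LessThan)
  also have "\<dots> \<ge> 0" using Suc T_nonneg by (intro sum_nonneg mult_nonneg_nonneg) auto
  finally show ?case .
qed

lemma power_mat_mult_vec_ge:
  fixes T :: "real mat"
  assumes T: "T \<in> carrier_mat n n" and T_nonneg: "\<And>i j. i < n \<Longrightarrow> j < n \<Longrightarrow> 0 \<le> T $$ (i,j)"
    and w: "w \<in> carrier_vec n" and "0 \<le> q"
    and ge: "\<And>i. i < n \<Longrightarrow> q * w $. i \<le> (T *\<^sub>v w) $. i"
    and "i < n"
  shows "q ^ k * w $. i \<le> (T ^\<^sub>m k *\<^sub>v w) $. i"
  using \<open>i < n\<close>
proof (induction k arbitrary: i)
  case 0
  then show ?case using w T by simp
next
  case (Suc k)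
  have "(T ^\<^sub>m Suc k *\<^sub>v w) $. i = (T ^\<^sub>m k *\<^sub>v (T *\<^sub>v w)) $. i"
    using T w by (simp add: assoc_mult_mat_vec[of _ n n _ n])
  also have "\<dots> = (\<Sum>j<n. (T ^\<^sub>m k) $$ (i,j) * (T *\<^sub>v w) $. j)"
    using Suc.prems T w by (intro index_mult_mat_vec_sum) auto
  also have "\<dots> \<ge> (\<Sum>j<n. (T ^\<^sub>m k) $$ (i,j) * (q * w $. j))"
    using Suc.prems ge power_mat_nonneg[OF T T_nonneg] by (intro sum_mono mult_left_mono) auto
  also have "(\<Sum>j<n. (T ^\<^sub>m k) $$ (i,j) * (q * w $. j)) = q * (T ^\<^sub>m k *\<^sub>v w) $. i"
    using Suc.prems T w
    by (simp add: index_mult_mat_vec_sum[of _ n] sum_distrib_left algebra_simps del: index_mult_mat_vec)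
  also have "\<dots> \<ge> q * (q ^ k * w $. i)" using Suc \<open>0 \<le> q\<close> by (intro mult_left_mono) auto
  finally show ?case by (simp add: algebra_simps)
qed

lemma spectral_radius_smult_le:
  fixes A :: "complex mat"
  assumes A: "A \<in> carrier_mat n n" and "0 < n" and "c \<noteq> 0"
  shows "spectral_radius (c \<cdot>\<^sub>m A) \<le> norm c * spectral_radius A"
proof -
  have cA: "c \<cdot>\<^sub>m A \<in> carrier_mat n n" using A by simp
  obtain l where "eigenvalue (c \<cdot>\<^sub>m A) l" and l: "norm l = spectral_radius (c \<cdot>\<^sub>m A)"
    using spectral_radius_mem_max(1)[OF cA \<open>0 < n\<close>] unfolding spectrum_def by auto
  then obtain v where v: "v \<in> carrier_vec n" "v \<noteq> 0\<^sub>v n" and "(c \<cdot>\<^sub>m A) *\<^sub>v v = l \<cdot>\<^sub>v v"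
    using A unfolding eigenvalue_def eigenvector_def by auto
  moreover have "(c \<cdot>\<^sub>m A) *\<^sub>v v = c \<cdot>\<^sub>v (A *\<^sub>v v)"
    using A v by (intro eq_vecI) (auto simp: scalar_prod_def sum_distrib_left mult.assoc)
  ultimately have "A *\<^sub>v v = (l / c) \<cdot>\<^sub>v v"
    using \<open>c \<noteq> 0\<close> by (metis smult_smult_assoc one_smult_vec divide_inverse_commute field_class.field_inverse)
  then have "l / c \<in> spectrum A"
    using A v unfolding spectrum_def eigenvalue_def eigenvector_def by auto
  then have "norm (l / c) \<le> spectral_radius A"
    using spectral_radius_mem_max(2)[OF A \<open>0 < n\<close>] by blast
  then show ?thesis
    using l \<open>c \<noteq> 0\<close> by (simp add: norm_divide divide_le_eq mult.commute)
qed

lemma scaled_power_mat_entries_bounded: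
  fixes T :: "real mat"
  assumes T: "T \<in> carrier_mat n n" and n: "0 < n" and rho: "spectral_radius (complex_mat T) < s"
  obtains c where "\<And>k i j. i < n \<Longrightarrow> j < n \<Longrightarrow> ((inverse s \<cdot>\<^sub>m T) ^\<^sub>m k) $$ (i,j) \<le> c"
proof -
  let ?T = "inverse s \<cdot>\<^sub>m T"
  have cT: "complex_mat T \<in> carrier_mat n n" and T': "?T \<in> carrier_mat n n"
    using T by simp_all
  have "0 \<le> spectral_radius (complex_mat T)"
    using spectral_radius_mem_max(1)[OF cT n] by auto
  with rho have "0 < s" by linarith
  have "complex_mat ?T = complex_of_real (inverse s) \<cdot>\<^sub>m complex_mat T"
    using T by (intro eq_matI) auto
  then have "spectral_radius (complex_mat ?T) \<le> inverse s * spectral_radius (complex_mat T)"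
    using spectral_radius_smult_le[OF cT n, of "complex_of_real (inverse s)"] \<open>0 < s\<close>
    by (simp add: norm_inverse)
  also have "\<dots> < 1"
    using \<open>0 < s\<close> rho by (simp add: field_simps)
  finally obtain c where c: "\<And>k. norm_bound (complex_mat ?T ^\<^sub>m k) c"
    using spectral_radius_jnf_norm_bound_less_1_upper_triangular[of "complex_mat ?T" n] T' by auto
  have "(?T ^\<^sub>m k) $$ (i,j) \<le> c" if "i < n" "j < n" for k i j
  proof -
    have "complex_mat ?T ^\<^sub>m k = complex_mat (?T ^\<^sub>m k)"
      using of_real_hom.mat_hom_pow[OF T', symmetric] .
    then have "norm (complex_of_real ((?T ^\<^sub>m k) $$ (i,j))) \<le> c"
      using c[of k] that T unfolding norm_bound_def by auto
    then show ?thesis by simp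
  qed
  then show ?thesis by (rule that)
qed

lemma Collatz_Wielandt_le_spectral_radius:
  fixes S :: "real mat"
  assumes S: "S \<in> carrier_mat n n" and S_nonneg: "\<And>i j. i < n \<Longrightarrow> j < n \<Longrightarrow> 0 \<le> S $$ (i,j)"
    and w: "w \<in> carrier_vec n" "w \<noteq> 0\<^sub>v n" and w_nonneg: "\<And>i. i < n \<Longrightarrow> 0 \<le> w $. i"
    and ge: "\<And>i. i < n \<Longrightarrow> r * w $. i \<le> (S *\<^sub>v w) $. i"
  shows "r \<le> spectral_radius (complex_mat S)"
proof (rule ccontr)
  obtain i0 where i0: "i0 < n" "0 < w $. i0"
    using w w_nonneg by (metis eq_vecI carrier_vecD index_zero_vec(1,2) order_less_le)
  have n: "0 < n" using i0 by auto
  have "0 \<le> spectral_radius (complex_mat S)"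
    using spectral_radius_mem_max(1)[of "complex_mat S" n] S n by auto
  moreover assume "\<not> ?thesis"
  ultimately obtain s where "0 < s" "s < r" and rho: "spectral_radius (complex_mat S) < s"
    using dense by (metis le_less_trans not_le)
  define S' where "S' = inverse s \<cdot>\<^sub>m S"
  have S': "S' \<in> carrier_mat n n" using S by (simp add: S'_def)
  have S'_nonneg: "0 \<le> S' $$ (i,j)" if "i < n" "j < n" for i j
    using that S S_nonneg \<open>0 < s\<close> by (simp add: S'_def)
  obtain c where c: "\<And>k i j. i < n \<Longrightarrow> j < n \<Longrightarrow> (S' ^\<^sub>m k) $$ (i,j) \<le> c"
    using scaled_power_mat_entries_bounded[OF S n rho] unfolding S'_def by blast
  define q where "q = r / s"
  have "1 < q" using \<open>0 < s\<close> \<open>s < r\<close> by (simp add: q_def)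
  have ge': "q * w $. i \<le> (S' *\<^sub>v w) $. i" if "i < n" for i
  proof -
    have "(S' *\<^sub>v w) $. i = (S *\<^sub>v w) $. i / s"
      using that S w by (simp add: S'_def scalar_prod_def sum_divide_distrib field_simps)
    then show ?thesis using ge[OF that] \<open>0 < s\<close> by (simp add: q_def field_simps)
  qed
  have bound: "q ^ k * w $. i0 \<le> c * (\<Sum>j<n. w $. j)" for k
  proof -
    have "q ^ k * w $. i0 \<le> (S' ^\<^sub>m k *\<^sub>v w) $. i0"
      using power_mat_mult_vec_ge[OF S' S'_nonneg w(1) _ ge' i0(1)] \<open>1 < q\<close> by simp
    also have "\<dots> = (\<Sum>j<n. (S' ^\<^sub>m k) $$ (i0,j) * w $. j)"
      using S' w i0 by (intro index_mult_mat_vec_sum) auto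
    also have "\<dots> \<le> (\<Sum>j<n. c * w $. j)"
      using c i0 w_nonneg by (intro sum_mono mult_right_mono) auto
    finally show ?thesis by (simp add: sum_distrib_left)
  qed
  obtain k where "c * (\<Sum>j<n. w $. j) / w $. i0 < q ^ k"
    using real_arch_pow[OF \<open>1 < q\<close>] by blast
  then have "c * (\<Sum>j<n. w $. j) < q ^ k * w $. i0"
    using i0(2) by (simp add: pos_divide_less_eq)
  with bound[of k] show False by simp
qed

lemma spectral_radius_mono:
  fixes R S :: "real mat"
  assumes R: "R \<in> carrier_mat n n" and S: "S \<in> carrier_mat n n" and n: "0 < n"
    and R_nonneg: "\<And>i j. i < n \<Longrightarrow> j < n \<Longrightarrow> 0 \<le> R $$ (i,j)"
    and le: "\<And>i j. i < n \<Longrightarrow> j < n \<Longrightarrow> R $$ (i,j) \<le> S $$ (i,j)"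
  shows "spectral_radius (complex_mat R) \<le> spectral_radius (complex_mat S)"
proof -
  have cR: "complex_mat R \<in> carrier_mat n n" using R by simp
  obtain l where "eigenvalue (complex_mat R) l" and l: "norm l = spectral_radius (complex_mat R)"
    using spectral_radius_mem_max(1)[OF cR n] unfolding spectrum_def by auto
  then obtain v where v: "v \<in> carrier_vec n" "v \<noteq> 0\<^sub>v n" and ev: "complex_mat R *\<^sub>v v = l \<cdot>\<^sub>v v"
    using cR unfolding eigenvalue_def eigenvector_def by auto
  define w where "w = map_vec norm v"
  have "w \<noteq> 0\<^sub>v n"
  proof
    assume "w = 0\<^sub>v n"
    have "norm (v $. i) = w $. i" if "i < n" for i
      using that v(1) by (simp add: w_def)
    then have "v $. i = 0" if "i < n" for i
      using that \<open>w = 0\<^sub>v n\<close> by simp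
    then have "v = 0\<^sub>v n" using v(1) by (intro eq_vecI) auto
    with v(2) show False ..
  qed
  then have w: "w \<in> carrier_vec n" "w \<noteq> 0\<^sub>v n"
    using v(1) by (auto simp: w_def)
  show ?thesis
  proof (rule Collatz_Wielandt_le_spectral_radius[OF S _ w])
    show "0 \<le> S $$ (i,j)" if "i < n" "j < n" for i j
      using R_nonneg[OF that] le[OF that] by linarith
    show "0 \<le> w $. i" if "i < n" for i
      using that v by (simp add: w_def)
    fix i assume i: "i < n"
    have "spectral_radius (complex_mat R) * w $. i = norm ((l \<cdot>\<^sub>v v) $. i)"
      using i v l by (simp add: w_def norm_mult)
    also have "\<dots> = norm (\<Sum>j<n. complex_of_real (R $$ (i,j)) * v $. j)"
      using ev[symmetric] i v R by (simp add: scalar_prod_def atLeast0LessThan)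
    also have "\<dots> \<le> (\<Sum>j<n. norm (complex_of_real (R $$ (i,j)) * v $. j))"
      by (rule norm_sum)
    also have "\<dots> = (\<Sum>j<n. R $$ (i,j) * w $. j)"
      using i R_nonneg v by (intro sum.cong) (auto simp: w_def norm_mult)
    also have "\<dots> \<le> (\<Sum>j<n. S $$ (i,j) * w $. j)"
      using i v le by (intro sum_mono mult_right_mono) (auto simp: w_def)
    also have "\<dots> = (S *\<^sub>v w) $. i"
      using S w i by (intro index_mult_mat_vec_sum[symmetric]) auto
    finally show "spectral_radius (complex_mat R) * w $. i \<le> (S *\<^sub>v w) $. i" .
  qed
qed

definition mat_of_cart :: "(nat \<Rightarrow> 'n::finite) \<Rightarrow> 'a^'n^'n \<Rightarrow> 'a mat" where
  "mat_of_cart h M = mat CARD('n) CARD('n) (\<lambda>(i, j). M $ h i $ h j)"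

definition vec_of_cart :: "(nat \<Rightarrow> 'n::finite) \<Rightarrow> 'a^'n \<Rightarrow> 'a vec" where
  "vec_of_cart h v = vec CARD('n) (\<lambda>i. v $ h i)"

context
  fixes h :: "nat \<Rightarrow> 'n::finite"
  assumes h: "bij_betw h {..<CARD('n)} UNIV"
begin

lemma vec_of_cart_inject: "vec_of_cart h u = vec_of_cart h v \<longleftrightarrow> u = v"
proof
  assume eq: "vec_of_cart h u = vec_of_cart h v"
  have entries: "u $ h i = v $ h i" if "i < CARD('n)" for i
    using arg_cong[OF eq, of "\<lambda>V. V $. i"] that by (simp add: vec_of_cart_def)
  show "u = v"
    unfolding Finite_Cartesian_Product.vec_eq_iff
  proof
    fix j
    obtain i where "i < CARD('n)" "j = h i"
      using bij_betw_imp_surj_on[OF h] by (metis UNIV_I imageE lessThan_iff)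
    with entries show "u $ j = v $ j" by simp
  qed
qed simp

lemma vec_of_cart_surj:
  assumes "V \<in> carrier_vec CARD('n)"
  shows "\<exists>v. V = vec_of_cart h v"
proof
  let ?v = "\<chi> j. V $. the_inv_into {..<CARD('n)} h j"
  show "V = vec_of_cart h ?v"
    using assms bij_betw_imp_inj_on[OF h]
    by (intro eq_vecI) (auto simp: vec_of_cart_def the_inv_into_f_f)
qed

lemma mat_of_cart_mult_vec:
  fixes M :: "'a::comm_semiring_1^'n^'n"
  shows "mat_of_cart h M *\<^sub>v vec_of_cart h v = vec_of_cart h (M *v v)"
proof (rule eq_vecI)
  fix i assume "i < dim_vec (vec_of_cart h (M *v v))"
  then have "i < CARD('n)" by (simp add: vec_of_cart_def)
  then have "(mat_of_cart h M *\<^sub>v vec_of_cart h v) $. i = (\<Sum>k<CARD('n). M $ h i $ h k * v $ h k)"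
    by (simp add: mat_of_cart_def vec_of_cart_def scalar_prod_def atLeast0LessThan)
  also have "\<dots> = (\<Sum>j\<in>UNIV. M $ h i $ j * v $ j)"
    by (rule sum.reindex_bij_betw[OF h])
  finally show "(mat_of_cart h M *\<^sub>v vec_of_cart h v) $. i = vec_of_cart h (M *v v) $. i"
    using \<open>i < CARD('n)\<close> by (simp add: vec_of_cart_def matrix_vector_mult_def)
qed (simp add: mat_of_cart_def vec_of_cart_def)

lemma eigenvalue_mat_of_cart:
  fixes M :: "'a::comm_ring_1^'n^'n"
  shows "eigenvalue (mat_of_cart h M) l \<longleftrightarrow> (\<exists>v. v \<noteq> 0 \<and> M *v v = (\<chi> i. l * v $ i))"
proof -
  have zero: "0\<^sub>v CARD('n) = vec_of_cart h 0"
    and smult: "l \<cdot>\<^sub>v vec_of_cart h v = vec_of_cart h (\<chi> i. l * v $ i)" for v :: "'a^'n"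
    by (auto simp: vec_of_cart_def)
  have "eigenvalue (mat_of_cart h M) l \<longleftrightarrow>
      (\<exists>V\<in>carrier_vec CARD('n). V \<noteq> 0\<^sub>v CARD('n) \<and> mat_of_cart h M *\<^sub>v V = l \<cdot>\<^sub>v V)"
    by (auto simp: eigenvalue_def eigenvector_def mat_of_cart_def)
  also have "\<dots> \<longleftrightarrow> (\<exists>v. vec_of_cart h v \<noteq> 0\<^sub>v CARD('n) \<and>
      mat_of_cart h M *\<^sub>v vec_of_cart h v = l \<cdot>\<^sub>v vec_of_cart h v)"
    using vec_of_cart_surj by (auto simp: vec_of_cart_def)
  also have "\<dots> \<longleftrightarrow> (\<exists>v. v \<noteq> 0 \<and> M *v v = (\<chi> i. l * v $ i))"
    by (simp only: zero smult mat_of_cart_mult_vec vec_of_cart_inject)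
  finally show ?thesis .
qed

lemma spec_rad_eq_spectral_radius:
  "spec_rad M = spectral_radius (complex_mat (mat_of_cart h M))"
proof -
  have "complex_mat (mat_of_cart h M) = mat_of_cart h (\<chi> i j. complex_of_real (M $ i $ j))"
    by (intro eq_matI) (auto simp: mat_of_cart_def)
  then show ?thesis
    by (simp add: spec_rad_def spectral_radius_def spectrum_def eigenvalue_mat_of_cart
        image_def setcompr_eq_image)
qed

end

theorem proposition2:
  fixes A :: "(real^'n) \<times> (real^'n) \<Rightarrow> real^'n^'n"
    and A' :: "(real^'n) \<times> (real^'n) \<Rightarrow> ((real^'n) \<times> (real^'n)) \<Rightarrow>\<^sub>L (real^'n^'n)"
    and gamma :: real
  assumes gamma_pos: "gamma > 0"
    and A_nonneg: "\<And>p i j. p \<in> unit_cube \<times> unit_cube \<Longrightarrow> A p $ i $ j \<ge> 0"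
    and A_deriv: "\<And>p. p \<in> unit_cube \<times> unit_cube \<Longrightarrow>
                   (A has_derivative blinfun_apply (A' p)) (at p within unit_cube \<times> unit_cube)"
    and A'_cont: "continuous_on (unit_cube \<times> unit_cube) A'"
    and diag_cond: "\<And>x y i j. x \<in> unit_cube \<Longrightarrow> y \<in> unit_cube \<Longrightarrow>
                   A (x, y) $ i $ j + x $ i * (A' (x, y) (axis i 1, 0)) $ i $ j \<ge> 0"
    and offdiag_cond: "\<And>x y i j k. x \<in> unit_cube \<Longrightarrow> y \<in> unit_cube \<Longrightarrow> k \<noteq> i \<Longrightarrow>
                   (A' (x, y) (axis k 1, 0)) $ i $ j \<ge> 0"
  shows "(\<forall>x\<in>unit_cube. \<forall>z\<in>unit_cube. (\<forall>i. x $ i \<le> z $ i) \<longrightarrow>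
            spec_rad (diag_mat x ** A (x, 0)) \<le> spec_rad (diag_mat z ** A (z, 0)))
       \<and> (\<forall>x\<in>unit_cube. \<forall>z\<in>unit_cube. (\<forall>i. x $ i \<le> z $ i) \<longrightarrow>
            spec_rad (diag_mat z ** A (z, 0)) < gamma \<longrightarrow>
            spec_rad (diag_mat x ** A (x, 0)) < gamma)"
proof -
  obtain h :: "nat \<Rightarrow> 'n" where h: "bij_betw h {..<CARD('n)} UNIV"
    using ex_bij_betw_nat_finite[of "UNIV :: 'n set"] by (auto simp: atLeast0LessThan)
  have zero: "0 \<in> unit_cube"
    by (simp add: unit_cube_def)
  have A0_deriv: "((\<lambda>x. A (x, 0)) has_derivative (\<lambda>u. A' (x, 0) (u, 0))) (at x within unit_cube)"
    if "x \<in> unit_cube" for x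
    using that zero by (intro has_derivative_in_compose2[OF A_deriv]) (auto intro!: derivative_eq_intros)
  have mono: "spec_rad (diag_mat x ** A (x, 0)) \<le> spec_rad (diag_mat z ** A (z, 0))"
    if "x \<in> unit_cube" "z \<in> unit_cube" "\<forall>i. x $ i \<le> z $ i" for x z
    unfolding spec_rad_eq_spectral_radius[OF h]
  proof (rule spectral_radius_mono)
    show "0 \<le> mat_of_cart h (diag_mat x ** A (x, 0)) $$ (i, j)" if "i < CARD('n)" "j < CARD('n)" for i j
      using that \<open>x \<in> unit_cube\<close> A_nonneg[of "(x, 0)"] zero
      by (simp add: mat_of_cart_def diag_mat_mult_nth unit_cube_def)
    show "mat_of_cart h (diag_mat x ** A (x, 0)) $$ (i, j) \<le> mat_of_cart h (diag_mat z ** A (z, 0)) $$ (i, j)"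
      if "i < CARD('n)" "j < CARD('n)" for i j
      using that diag_mat_mult_entry_mono[OF convex_unit_cube _ A0_deriv diag_cond[OF _ zero]
          offdiag_cond[OF _ zero] \<open>x \<in> unit_cube\<close> \<open>z \<in> unit_cube\<close>] \<open>\<forall>i. x $ i \<le> z $ i\<close>
      by (simp add: mat_of_cart_def unit_cube_def)
  qed (auto simp: mat_of_cart_def)
  then show ?thesis
    by (meson order_le_less_trans)
qed

end
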